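(* Let $\mathcal C=\mathcal C(I,A,(\rho_i)_{i\in I},(C^a)_{a\in A})$ be a connected Cartan scheme and $\mathcal R=\mathcal R(\mathcal C,(R^a)_{a\in A})$ a root system of type $\mathcal C$. Let $I'\subset I$, $I''=I\setminus I'$, and assume $I'\neq\emptyset\neq I''$. For $a\in A$ put $\hat R^a=(R^a\cap\sum_{i\in I'}\mathbb Z\alpha_i)\cup(R^a\cap\sum_{i\in I''}\mathbb Z\alpha_i)$. The following are equivalent: (1) there exists $a\in A$ with $c^a_{ij}=0$ for all $i\in I'$, $j\in I''$; (2) $c^a_{ij}=c^a_{ji}=0$ for all $a\in A$, $i\in I'$, $j\in I''$; (3) $\mathcal R(\mathcal C,(\hat R^a)_{a\in A})$ is a root system of type $\mathcal C$. If $\mathcal R$ is finite, then (1)–(3) are also equivalent to each of: (4) $\hat R^a=R^a$ for all $a\in A$; (5) $\mathcal R$ is the direct sum of its restrictions to $I'$ and $I''$, i.e. $R^a=(R^a\cap\sum_{i\in I'}\mathbb Z\alpha_i)\cup(R^a\cap\sum_{j\in I''}\mathbb Z\alpha_j)$ for all $a\in A$.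
   Context: Let $I$ be a nonempty finite set and $\{\alpha_i\mid i\in I\}$ the standard basis of $\mathbb Z^I$; $\mathbb N_0=\{0,1,2,\dots\}$. A generalized Cartan matrix is $C=(c_{ij})_{i,j\in I}\in\mathbb Z^{I\times I}$ with $c_{ii}=2$, $c_{jk}\le0$ for $j\ne k$, and $c_{ij}=0\Rightarrow c_{ji}=0$. A Cartan scheme $\mathcal C=\mathcal C(I,A,(\rho_i)_{i\in I},(C^a)_{a\in A})$ consists of a nonempty set $A$, maps $\rho_i:A\to A$ and generalized Cartan matrices $C^a=(c^a_{jk})_{j,k\in I}$ such that (C1) $\rho_i^2=\mathrm{id}$ and (C2) $c^a_{ij}=c^{\rho_i(a)}_{ij}$ for all $a\in A$, $i,j\in I$. It is connected if the group generated by the $\rho_i$ acts transitively on $A$. For $i\in I$, $a\in A$ let $\sigma_i^a\in\mathrm{Aut}(\mathbb Z^I)$, $\sigma_i^a(\alpha_j)=\alpha_j-c^a_{ij}\alpha_i$. A root system of type $\mathcal C$ is a family $\mathcal R=\mathcal R(\mathcal C,(R^a)_{a\in A})$ of subsets $R^a\subset\mathbb Z^I$ such that, writing $R^a_+=R^a\cap\mathbb N_0^I$ and $m^a_{i,j}=|R^a\cap(\mathbb N_0\alpha_i+\mathbb N_0\alpha_j)|$, for all $a\in A$, $i,j\in I$: (R1) $R^a=R^a_+\cup(-R^a_+)$; (R2) $R^a\cap\mathbb Z\alpha_i=\{\alpha_i,-\alpha_i\}$; (R3) $\sigma_i^a(R^a)=R^{\rho_i(a)}$; (R4) if $i\neq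 j$ and $m^a_{i,j}$ is finite then $(\rho_i\rho_j)^{m^a_{i,j}}(a)=a$. It is finite if every $R^a$ is finite. *)

theory Defs
  imports Main
begin

text \<open>Elements of Z^I are represented as functions 'i => int vanishing outside I.\<close>

definition zvec :: "'i set \<Rightarrow> ('i \<Rightarrow> int) set" where
  "zvec I = {v. \<forall>j. j \<notin> I \<longrightarrow> v j = 0}"

definition zspan :: "'i set \<Rightarrow> ('i \<Rightarrow> int) set" where
  "zspan J = {v. \<forall>j. j \<notin> J \<longrightarrow> v j = 0}"

definition alpha :: "'i \<Rightarrow> 'i \<Rightarrow> int" where
  "alpha i = (\<lambda>j. if j = i then 1 else 0)"

definition gen_cartan_matrix :: "'i set \<Rightarrow> ('i \<Rightarrow> 'i \<Rightarrow> int) \<Rightarrow> bool" where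
  "gen_cartan_matrix I M \<longleftrightarrow>
     (\<forall>i\<in>I. M i i = 2) \<and>
     (\<forall>j\<in>I. \<forall>k\<in>I. j \<noteq> k \<longrightarrow> M j k \<le> 0) \<and>
     (\<forall>i\<in>I. \<forall>j\<in>I. M i j = 0 \<longrightarrow> M j i = 0)"

definition cartan_scheme ::
  "'i set \<Rightarrow> 'a set \<Rightarrow> ('i \<Rightarrow> 'a \<Rightarrow> 'a) \<Rightarrow> ('a \<Rightarrow> 'i \<Rightarrow> 'i \<Rightarrow> int) \<Rightarrow> bool" where
  "cartan_scheme I A rho C \<longleftrightarrow>
     finite I \<and> I \<noteq> {} \<and> A \<noteq> {} \<and>
     (\<forall>i\<in>I. \<forall>a\<in>A. rho i a \<in> A \<and> rho i (rho i a) = a) \<and>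
     (\<forall>a\<in>A. gen_cartan_matrix I (C a)) \<and>
     (\<forall>a\<in>A. \<forall>i\<in>I. \<forall>j\<in>I. C a i j = C (rho i a) i j)"

text \<open>Connected: the group generated by the rho_i acts transitively on A.
  Since each rho_i is an involution on A, the group is generated as a monoid
  by the rho_i, so it suffices to use finite words.\<close>
definition connected_cs :: "'i set \<Rightarrow> 'a set \<Rightarrow> ('i \<Rightarrow> 'a \<Rightarrow> 'a) \<Rightarrow> bool" where
  "connected_cs I A rho \<longleftrightarrow>
     (\<forall>a\<in>A. \<forall>b\<in>A. \<exists>is. set is \<subseteq> I \<and> foldr rho is a = b)"

text \<open>sigma_i^a(v) = v - (sum_j c^a_ij v_j) alpha_i, the linear map with
  alpha_j |-> alpha_j - c^a_ij alpha_i.\<close>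
definition sigma :: "'i set \<Rightarrow> ('a \<Rightarrow> 'i \<Rightarrow> 'i \<Rightarrow> int) \<Rightarrow> 'a \<Rightarrow> 'i \<Rightarrow> ('i \<Rightarrow> int) \<Rightarrow> ('i \<Rightarrow> int)" where
  "sigma I C a i v = (\<lambda>k. v k - (if k = i then (\<Sum>j\<in>I. C a i j * v j) else 0))"

definition pos_roots :: "('i \<Rightarrow> int) set \<Rightarrow> ('i \<Rightarrow> int) set" where
  "pos_roots R = {v \<in> R. \<forall>j. v j \<ge> 0}"

definition cone2 :: "'i \<Rightarrow> 'i \<Rightarrow> ('i \<Rightarrow> int) set" where
  "cone2 i j = {v. \<exists>m n :: nat. v = (\<lambda>k. int m * alpha i k + int n * alpha j k)}"

definition root_system ::
  "'i set \<Rightarrow> 'a set \<Rightarrow> ('i \<Rightarrow> 'a \<Rightarrow> 'a) \<Rightarrow> ('a \<Rightarrow> 'i \<Rightarrow> 'i \<Rightarrow> int)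
     \<Rightarrow> ('a \<Rightarrow> ('i \<Rightarrow> int) set) \<Rightarrow> bool" where
  "root_system I A rho C R \<longleftrightarrow>
     cartan_scheme I A rho C \<and>
     (\<forall>a\<in>A. R a \<subseteq> zvec I) \<and>
     (\<forall>a\<in>A. R a = pos_roots (R a) \<union> uminus ` pos_roots (R a)) \<and>
     (\<forall>a\<in>A. \<forall>i\<in>I. R a \<inter> {v. \<exists>k::int. v = (\<lambda>j. k * alpha i j)} = {alpha i, - alpha i}) \<and>
     (\<forall>a\<in>A. \<forall>i\<in>I. sigma I C a i ` R a = R (rho i a)) \<and>
     (\<forall>a\<in>A. \<forall>i\<in>I. \<forall>j\<in>I. i \<noteq> j \<longrightarrow> finite (R a \<inter> cone2 i j) \<longrightarrow>
        ((rho i \<circ> rho j) ^^ card (R a \<inter> cone2 i j)) a = a)"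

definition finite_rs :: "'a set \<Rightarrow> ('a \<Rightarrow> ('i \<Rightarrow> int) set) \<Rightarrow> bool" where
  "finite_rs A R \<longleftrightarrow> (\<forall>a\<in>A. finite (R a))"

end

theory Submission
  imports Defs
begin

text \<open>If the Cartan matrix at one object has no entries between \<open>I'\<close> and \<open>I''\<close>, the same holds
  after every \<open>\<rho>\<^sub>k\<close>: a nonzero entry \<open>c\<^bsub>j l\<^esub>\<close> at \<open>\<rho>\<^sub>k(a)\<close> would produce the root
  \<open>\<sigma>\<^sub>k(\<alpha>\<^sub>l - c \<alpha>\<^sub>j)\<close> of \<open>a\<close>, supported on \<open>{j, k, l}\<close>, which \<open>\<sigma>\<^sub>j\<close> turns into a root with coordinates of
  both signs; connectedness spreads the property to all objects. Then every \<open>\<sigma>\<^sub>i\<close> preserves both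
  sublattices, and a root \<open>m \<alpha>\<^sub>i + n \<alpha>\<^sub>j\<close> with \<open>i\<close>, \<open>j\<close> in different blocks must lie on an axis, so
  the restricted family is again a root system. Conversely, since \<open>\<alpha>\<^sub>j - c\<^bsub>i j\<^esub> \<alpha>\<^sub>i\<close> is a root, roots
  lying in the two sublattices force the blocks to decouple.

  For finite \<open>R\<close>, suppose a positive root \<open>\<beta>\<close> of \<open>a\<close> lies outside both sublattices. Any product \<open>w\<close> of
  simple reflections starting at \<open>a\<close> keeps \<open>\<beta>\<close> positive and outside, because the simple roots lie in
  the sublattices and \<open>\<sigma>\<^sub>i\<close> makes no other positive root negative. Writing \<open>w \<beta>\<close> in simple roots shows that some \<open>\<alpha>\<^sub>i\<close> pulls back under \<open>w\<close> to a positive root,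
  and appending \<open>\<sigma>\<^sub>i\<close> to \<open>w\<close> strictly enlarges its set of inversions, which is impossible inside the finite set
  \<open>R\<^sup>a\<close>.\<close>

definition zlinear :: "(('i \<Rightarrow> int) \<Rightarrow> ('j \<Rightarrow> int)) \<Rightarrow> bool" where
  "zlinear f \<longleftrightarrow>
     (\<forall>c d x y. f (\<lambda>k. c * x k + d * y k) = (\<lambda>k. c * f x k + d * f y k))"

lemma zlinear_id: "zlinear id"
  by (simp add: zlinear_def)

lemma zlinear_comp: "zlinear f \<Longrightarrow> zlinear g \<Longrightarrow> zlinear (f \<circ> g)"
  by (simp add: zlinear_def)

lemma zlinear_smult:
  assumes "zlinear f" shows "f (\<lambda>k. c * x k) = (\<lambda>k. c * f x k)"
proof -
  have "f (\<lambda>k. c * x k + 0 * x k) = (\<lambda>k. c * f x k + 0 * f x k)"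
    using assms unfolding zlinear_def by blast
  then show ?thesis by simp
qed

lemma zlinear_add:
  assumes "zlinear f" shows "f (\<lambda>k. x k + y k) = (\<lambda>k. f x k + f y k)"
proof -
  have "f (\<lambda>k. 1 * x k + 1 * y k) = (\<lambda>k. 1 * f x k + 1 * f y k)"
    using assms unfolding zlinear_def by blast
  then show ?thesis by simp
qed

lemma zlinear_uminus: "zlinear f \<Longrightarrow> f (- x) = - f x"
  using zlinear_smult[of f "-1" x] by (simp add: fun_Compl_def)

lemma zlinear_sum:
  assumes f: "zlinear f" and F: "finite F"
  shows "f (\<lambda>k. \<Sum>i\<in>F. c i * g i k) = (\<lambda>k. \<Sum>i\<in>F. c i * f (g i) k)"
  using F
proof (induction F rule: finite_induct)
  case empty
  then show ?case using zlinear_smult[OF f, of 0] by simp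
next
  case (insert x F)
  then show ?case
    by (simp add: zlinear_add[OF f] zlinear_smult[OF f])
qed

lemma zlinear_sigma: "zlinear (sigma I C a i)"
  unfolding zlinear_def sigma_def
  by (auto simp: fun_eq_iff sum.distrib sum_distrib_left algebra_simps)

lemma sigma_zspan:
  assumes "\<forall>i\<in>I - K. \<forall>l\<in>K. C a i l = 0" and "v \<in> zspan K" and "i \<in> I"
  shows "sigma I C a i v \<in> zspan K"
proof -
  have "(\<Sum>l\<in>I. C a i l * v l) = 0" if "i \<notin> K"
    using assms that by (intro sum.neutral) (auto simp: zspan_def)
  then show ?thesis
    using assms(2) by (auto simp: zspan_def sigma_def)
qed

lemma sum_times_alpha: "finite I \<Longrightarrow> l \<in> I \<Longrightarrow> (\<Sum>m\<in>I. f m * alpha l m) = f l"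
  by (simp add: alpha_def if_distrib[of "times _"] cong: if_cong)

lemma zvec_eq_sum_alpha:
  assumes "finite I" and "x \<in> zvec I"
  shows "x = (\<lambda>k. \<Sum>i\<in>I. x i * alpha i k)"
proof
  fix k
  have "(\<Sum>i\<in>I. x i * alpha i k) = (\<Sum>i\<in>I. if k = i then x k else 0)"
    by (rule sum.cong) (auto simp: alpha_def)
  also have "\<dots> = x k"
    using assms by (auto simp: zvec_def)
  finally show "x k = (\<Sum>i\<in>I. x i * alpha i k)" by simp
qed

lemma uminus_uminus_fun: "- (- v) = (v :: 'i \<Rightarrow> int)"
  by (simp add: fun_eq_iff)

lemma pos_roots_Int_closed:
  assumes S: "S = pos_roots S \<union> uminus ` pos_roots S"
    and X: "\<And>v. v \<in> X \<Longrightarrow> - v \<in> X"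
  shows "S \<inter> X = pos_roots (S \<inter> X) \<union> uminus ` pos_roots (S \<inter> X)"
proof -
  have pos: "pos_roots (S \<inter> X) = pos_roots S \<inter> X"
    by (auto simp: pos_roots_def)
  have neg: "uminus ` (pos_roots S \<inter> X) = uminus ` pos_roots S \<inter> X"
    using X by (auto simp: uminus_uminus_fun intro!: image_eqI[where x = "- _"])
  have "S \<inter> X = (pos_roots S \<union> uminus ` pos_roots S) \<inter> X"
    using S by (rule arg_cong)
  also have "\<dots> = pos_roots (S \<inter> X) \<union> uminus ` pos_roots (S \<inter> X)"
    by (simp only: pos neg Int_Un_distrib2)
  finally show ?thesis .
qed

locale root_sys =
  fixes I :: "'i set" and A :: "'a set" and rho :: "'i \<Rightarrow> 'a \<Rightarrow> 'a"
    and C :: "'a \<Rightarrow> 'i \<Rightarrow> 'i \<Rightarrow> int" and R :: "'a \<Rightarrow> ('i \<Rightarrow> int) set"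
  assumes root_system: "root_system I A rho C R"
begin

lemma cartan_scheme: "cartan_scheme I A rho C"
  using root_system by (simp add: root_system_def)

lemma finite_I: "finite I" and I_nonempty: "I \<noteq> {}" and A_nonempty: "A \<noteq> {}"
  using cartan_scheme by (simp_all add: cartan_scheme_def)

lemma rho_in_A: "i \<in> I \<Longrightarrow> a \<in> A \<Longrightarrow> rho i a \<in> A"
  and rho_rho: "i \<in> I \<Longrightarrow> a \<in> A \<Longrightarrow> rho i (rho i a) = a"
  using cartan_scheme unfolding cartan_scheme_def by blast+

lemma gen_cartan_matrix: "a \<in> A \<Longrightarrow> gen_cartan_matrix I (C a)"
  using cartan_scheme unfolding cartan_scheme_def by blast

lemma cartan_diag: "a \<in> A \<Longrightarrow> i \<in> I \<Longrightarrow> C a i i = 2"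
  using gen_cartan_matrix by (simp add: gen_cartan_matrix_def)

lemma cartan_zero_sym: "a \<in> A \<Longrightarrow> i \<in> I \<Longrightarrow> j \<in> I \<Longrightarrow> C a i j = 0 \<Longrightarrow> C a j i = 0"
  using gen_cartan_matrix unfolding gen_cartan_matrix_def by blast

lemma cartan_rho:
  assumes "a \<in> A" "i \<in> I" "j \<in> I" shows "C (rho i a) i j = C a i j"
proof -
  have "\<forall>a\<in>A. \<forall>i\<in>I. \<forall>j\<in>I. C a i j = C (rho i a) i j"
    using cartan_scheme unfolding cartan_scheme_def by blast
  then show ?thesis
    using assms by (blast intro: sym)
qed

lemma roots_zvec: "a \<in> A \<Longrightarrow> R a \<subseteq> zvec I"
  using root_system unfolding root_system_def by (elim conjE) (erule bspec)

lemma roots_pos_neg: "a \<in> A \<Longrightarrow> R a = pos_roots (R a) \<union> uminus ` pos_roots (R a)"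
  using root_system unfolding root_system_def by (elim conjE) (erule bspec)

lemma roots_on_axis:
  assumes "a \<in> A" "i \<in> I"
  shows "R a \<inter> {v. \<exists>k::int. v = (\<lambda>j. k * alpha i j)} = {alpha i, - alpha i}"
proof -
  have "\<forall>a\<in>A. \<forall>i\<in>I. R a \<inter> {v. \<exists>k::int. v = (\<lambda>j. k * alpha i j)} = {alpha i, - alpha i}"
    using root_system unfolding root_system_def by (elim conjE)
  then show ?thesis using assms by blast
qed

lemma sigma_image_roots:
  assumes "a \<in> A" "i \<in> I" shows "sigma I C a i ` R a = R (rho i a)"
proof -
  have "\<forall>a\<in>A. \<forall>i\<in>I. sigma I C a i ` R a = R (rho i a)"
    using root_system unfolding root_system_def by (elim conjE)
  then show ?thesis using assms by blast
qed

lemma rho_rho_power_cone: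
  assumes "a \<in> A" "i \<in> I" "j \<in> I" "i \<noteq> j" "finite (R a \<inter> cone2 i j)"
  shows "((rho i \<circ> rho j) ^^ card (R a \<inter> cone2 i j)) a = a"
proof -
  have "\<forall>a\<in>A. \<forall>i\<in>I. \<forall>j\<in>I. i \<noteq> j \<longrightarrow> finite (R a \<inter> cone2 i j) \<longrightarrow>
      ((rho i \<circ> rho j) ^^ card (R a \<inter> cone2 i j)) a = a"
    using root_system unfolding root_system_def by (elim conjE)
  then show ?thesis using assms by blast
qed

lemma alpha_root: "a \<in> A \<Longrightarrow> i \<in> I \<Longrightarrow> alpha i \<in> R a"
  using roots_on_axis by blast

lemma zero_notin_roots:
  assumes a: "a \<in> A" shows "(\<lambda>k. 0) \<notin> R a"
proof
  obtain i where i: "i \<in> I" using I_nonempty by blast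
  assume "(\<lambda>k. 0) \<in> R a"
  then have "(\<lambda>k. 0) \<in> R a \<inter> {v. \<exists>k::int. v = (\<lambda>j. k * alpha i j)}" by force
  then have "(\<lambda>k. 0) = alpha i \<or> (\<lambda>k. 0) = - alpha i" using roots_on_axis[OF a i] by blast
  then show False by (auto simp: alpha_def fun_eq_iff dest: spec[of _ i])
qed

lemma root_sign: "a \<in> A \<Longrightarrow> v \<in> R a \<Longrightarrow> (\<forall>j. v j \<ge> 0) \<or> (\<forall>j. v j \<le> 0)"
  using roots_pos_neg[of a] by (force simp: pos_roots_def)

lemma pos_root_not_nonpos:
  assumes "a \<in> A" "p \<in> pos_roots (R a)" shows "\<not> (\<forall>k. p k \<le> 0)"
proof
  assume "\<forall>k. p k \<le> 0"
  then have "p = (\<lambda>k. 0)" using assms(2) by (auto simp: pos_roots_def fun_eq_iff intro: order_antisym)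
  then show False using assms zero_notin_roots by (simp add: pos_roots_def)
qed

lemma uminus_pos_root_not_pos:
  assumes "a \<in> A" "p \<in> pos_roots (R a)" shows "- p \<notin> pos_roots (R a)"
  using pos_root_not_nonpos[OF assms] by (auto simp: pos_roots_def)

lemma sigma_sigma:
  assumes a: "a \<in> A" and i: "i \<in> I"
  shows "sigma I C (rho i a) i (sigma I C a i v) = v"
proof -
  define s where "s = (\<Sum>j\<in>I. C a i j * v j)"
  have "(\<Sum>j\<in>I. C (rho i a) i j * sigma I C a i v j)
      = (\<Sum>j\<in>I. C a i j * v j - (if j = i then C a i i * s else 0))"
    by (rule sum.cong) (auto simp: sigma_def s_def cartan_rho[OF a i] algebra_simps)
  also have "\<dots> = - s"
    using i finite_I cartan_diag[OF a i] by (simp add: sum_subtractf s_def)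
  finally show ?thesis
    by (auto simp: sigma_def s_def fun_eq_iff)
qed

lemma sigma_alpha:
  "i \<in> I \<Longrightarrow> j \<in> I \<Longrightarrow> sigma I C a i (alpha j) = (\<lambda>k. alpha j k - C a i j * alpha i k)"
  using sum_times_alpha[OF finite_I] by (auto simp: sigma_def alpha_def fun_eq_iff)

lemma reflect_alpha_root:
  assumes a: "a \<in> A" and i: "i \<in> I" and j: "j \<in> I"
  shows "(\<lambda>k. alpha j k - C a i j * alpha i k) \<in> R a"
proof -
  have "sigma I C (rho i a) i (alpha j) \<in> R (rho i (rho i a))"
    using sigma_image_roots[OF rho_in_A[OF i a] i] alpha_root[OF rho_in_A[OF i a] j] by blast
  then show ?thesis
    using sigma_alpha[OF i j] cartan_rho[OF a i j] rho_rho[OF i a] by simp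
qed

text \<open>Otherwise \<open>\<sigma>\<^sub>j\<close> would negate the \<open>j\<close>-th coordinate of \<open>v\<close> and keep the \<open>l\<close>-th one,
  producing a root with coordinates of both signs.\<close>
lemma root_support_coupled:
  assumes a: "a \<in> A" and j: "j \<in> I" and v: "v \<in> R a" and "v j \<noteq> 0"
    and "l \<noteq> j" "v l \<noteq> 0"
  shows "\<exists>m\<in>I. m \<noteq> j \<and> v m \<noteq> 0 \<and> C a j m \<noteq> 0"
proof (rule ccontr)
  assume "\<not> ?thesis"
  then have "(\<Sum>m\<in>I. C a j m * v m) = (\<Sum>m\<in>I. if m = j then 2 * v j else 0)"
    by (intro sum.cong) (auto simp: cartan_diag[OF a j])
  also have "\<dots> = 2 * v j" using j finite_I by simp
  finally have "sigma I C a j v j = - v j" "sigma I C a j v l = v l"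
    using \<open>l \<noteq> j\<close> by (simp_all add: sigma_def)
  moreover have "sigma I C a j v \<in> R (rho j a)"
    using sigma_image_roots[OF a j] v by blast
  ultimately have "- v j \<ge> 0 \<and> v l \<ge> 0 \<or> - v j \<le> 0 \<and> v l \<le> 0"
    using root_sign[OF rho_in_A[OF j a]] by metis
  moreover have "v j \<ge> 0 \<and> v l \<ge> 0 \<or> v j \<le> 0 \<and> v l \<le> 0"
    using root_sign[OF a v] by blast
  ultimately show False
    using assms(4,6) by linarith
qed

lemma cartan_zero_reflect:
  assumes a: "a \<in> A" and k: "k \<in> I" and j: "j \<in> I" and l: "l \<in> I"
    and distinct: "j \<noteq> l" "k \<noteq> j" "k \<noteq> l"
    and zero: "C a j l = 0" "C a j k = 0" "C a k j = 0"
  shows "C (rho k a) j l = 0"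
proof (rule ccontr)
  define b where "b = rho k a"
  define c where "c = C b j l"
  assume "C (rho k a) j l \<noteq> 0"
  then have "c \<noteq> 0" by (simp add: b_def c_def)
  define g where "g = (\<lambda>m. alpha l m - c * alpha j m)"
  have b: "b \<in> A" using rho_in_A[OF k a] by (simp add: b_def)
  have "g \<in> R b" unfolding g_def c_def using reflect_alpha_root[OF b j l] .
  then have v_root: "sigma I C b k g \<in> R a"
    using sigma_image_roots[OF b k] rho_rho[OF k a] by (auto simp: b_def)
  have "(\<Sum>m\<in>I. C b k m * g m)
      = (\<Sum>m\<in>I. C b k m * alpha l m) - c * (\<Sum>m\<in>I. C b k m * alpha j m)"
    by (simp add: g_def algebra_simps sum_subtractf sum_distrib_left)
  also have "\<dots> = C b k l - c * C b k j"
    using sum_times_alpha[OF finite_I l] sum_times_alpha[OF finite_I j] by simp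
  also have "\<dots> = C a k l"
    using cartan_rho[OF a k l] cartan_rho[OF a k j] zero(3) by (simp add: b_def)
  finally have "(\<Sum>m\<in>I. C b k m * g m) = C a k l" .
  then have v: "sigma I C b k g = (\<lambda>m. alpha l m - c * alpha j m - (if m = k then C a k l else 0))"
    unfolding sigma_def by (simp only:) (simp add: g_def)
  have "\<exists>m\<in>I. m \<noteq> j \<and> sigma I C b k g m \<noteq> 0 \<and> C a j m \<noteq> 0"
    by (rule root_support_coupled[OF a j v_root, of l]) (use distinct \<open>c \<noteq> 0\<close> in \<open>simp_all add: v alpha_def\<close>)
  then show False
    using zero distinct by (auto simp: v alpha_def split: if_splits)
qed

lemma cartan_block_zero_rho:
  assumes J: "J \<subseteq> I" and a: "a \<in> A" and k: "k \<in> I"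
    and zero: "\<forall>x\<in>J. \<forall>y\<in>I - J. C a x y = 0"
  shows "\<forall>x\<in>J. \<forall>y\<in>I - J. C (rho k a) x y = 0"
proof (intro ballI)
  fix x y assume x: "x \<in> J" and y: "y \<in> I - J"
  have xI: "x \<in> I" and yI: "y \<in> I" and "x \<noteq> y" using x y J by auto
  have zero2: "C a u v = 0 \<and> C a v u = 0" if "u \<in> J" "v \<in> I - J" for u v
    using zero cartan_zero_sym[OF a] J that by blast
  have b: "rho k a \<in> A" using rho_in_A[OF k a] .
  consider "k = x" | "k = y" | "k \<noteq> x" "k \<noteq> y" "k \<in> J" | "k \<noteq> x" "k \<noteq> y" "k \<in> I - J"
    using k by blast
  then show "C (rho k a) x y = 0"
  proof cases
    case 1
    then show ?thesis using cartan_rho[OF a xI yI] zero2[OF x y] by simp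
  next
    case 2
    then have "C (rho k a) y x = 0" using cartan_rho[OF a yI xI] zero2[OF x y] by simp
    then show ?thesis using cartan_zero_sym[OF b yI xI] by simp
  next
    case 3
    then have "C (rho k a) y x = 0"
      using cartan_zero_reflect[OF a k yI xI] \<open>x \<noteq> y\<close> zero2[OF x y] zero2[OF 3(3) y] by auto
    then show ?thesis using cartan_zero_sym[OF b yI xI] by simp
  next
    case 4
    then show ?thesis
      using cartan_zero_reflect[OF a k xI yI] \<open>x \<noteq> y\<close> zero2[OF x y] zero2[OF x 4(3)] by auto
  qed
qed

lemma cartan_block_zero_foldr:
  assumes J: "J \<subseteq> I" and a: "a \<in> A" and zero: "\<forall>x\<in>J. \<forall>y\<in>I - J. C a x y = 0"
    and "set is \<subseteq> I"
  shows "foldr rho is a \<in> A \<and> (\<forall>x\<in>J. \<forall>y\<in>I - J. C (foldr rho is a) x y = 0)"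
  using \<open>set is \<subseteq> I\<close>
proof (induction "is")
  case Nil
  then show ?case using a zero by simp
next
  case (Cons i "is")
  then show ?case using rho_in_A cartan_block_zero_rho[OF J] by simp
qed

lemma cartan_block_zero_connected:
  assumes J: "J \<subseteq> I" and conn: "connected_cs I A rho"
    and a: "a \<in> A" and zero: "\<forall>x\<in>J. \<forall>y\<in>I - J. C a x y = 0"
  shows "\<forall>b\<in>A. \<forall>x\<in>J. \<forall>y\<in>I - J. C b x y = 0 \<and> C b y x = 0"
proof (intro ballI)
  fix b x y assume b: "b \<in> A" and x: "x \<in> J" and y: "y \<in> I - J"
  obtain "is" where "set is \<subseteq> I" "foldr rho is a = b"
    using conn a b unfolding connected_cs_def by blast
  then have "C b x y = 0"
    using cartan_block_zero_foldr[OF J a zero] x y by blast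
  moreover have "C b y x = 0"
    using cartan_zero_sym[OF b _ _ calculation] x y J by blast
  ultimately show "C b x y = 0 \<and> C b y x = 0" ..
qed

lemma cartan_block_zero_if_roots_split:
  assumes J: "J \<subseteq> I" and a: "a \<in> A" and split: "R a \<subseteq> zspan J \<union> zspan (I - J)"
    and x: "x \<in> J" and y: "y \<in> I - J"
  shows "C a x y = 0"
proof (rule ccontr)
  assume "C a x y \<noteq> 0"
  moreover have "x \<in> I" "y \<in> I" "x \<noteq> y" using x y J by auto
  moreover have "(\<lambda>k. alpha y k - C a x y * alpha x k) \<in> zspan J \<union> zspan (I - J)"
    using split reflect_alpha_root[OF a \<open>x \<in> I\<close> \<open>y \<in> I\<close>] by blast
  ultimately show False
    using x y by (auto simp: zspan_def alpha_def dest: spec[of _ x] spec[of _ y])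
qed

lemma sigma_pos_root:
  assumes b: "b \<in> A" and i: "i \<in> I" and p: "p \<in> pos_roots (R b)" and "p \<noteq> alpha i"
  shows "sigma I C b i p \<in> pos_roots (R (rho i b))"
proof -
  have pR: "p \<in> R b" and p_nonneg: "\<forall>j. p j \<ge> 0" using p by (auto simp: pos_roots_def)
  obtain j where "j \<noteq> i" "p j \<noteq> 0"
  proof (rule ccontr)
    assume "\<not> thesis"
    then have "p = (\<lambda>j. p i * alpha i j)" using that by (auto simp: fun_eq_iff alpha_def)
    then have "p \<in> {alpha i, - alpha i}" using roots_on_axis[OF b i] pR by blast
    then show False using \<open>p \<noteq> alpha i\<close> p_nonneg by (auto simp: alpha_def dest: spec[of _ i])
  qed
  then have "sigma I C b i p j > 0"
    using p_nonneg by (simp add: sigma_def order_le_neq_trans)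
  moreover have root: "sigma I C b i p \<in> R (rho i b)" using sigma_image_roots[OF b i] pR by blast
  ultimately have "\<forall>k. sigma I C b i p k \<ge> 0"
    using root_sign[OF rho_in_A[OF i b] root] by (meson not_le)
  then show ?thesis
    using root by (simp add: pos_roots_def)
qed

text \<open>The inverse \<open>w'\<close> of the reflection product \<open>w\<close> is carried along because it is applied to
  arbitrary vectors, not only to roots.\<close>
inductive walk ::
  "'a \<Rightarrow> 'a \<Rightarrow> (('i \<Rightarrow> int) \<Rightarrow> ('i \<Rightarrow> int)) \<Rightarrow> (('i \<Rightarrow> int) \<Rightarrow> ('i \<Rightarrow> int)) \<Rightarrow> bool"
  for a where
  walk_refl: "walk a a id id"
| walk_step: "walk a b w w' \<Longrightarrow> i \<in> I \<Longrightarrow>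
    walk a (rho i b) (sigma I C b i \<circ> w) (w' \<circ> sigma I C (rho i b) i)"

lemma walk_props:
  assumes "a \<in> A" and "walk a b w w'"
  shows "b \<in> A \<and> w ` R a = R b \<and> (\<forall>v. w' (w v) = v) \<and> zlinear w \<and> zlinear w'"
  using assms(2)
proof (induction rule: walk.induct)
  case walk_refl
  then show ?case using \<open>a \<in> A\<close> zlinear_id by (simp add: id_def)
next
  case (walk_step b w w' i)
  have "(sigma I C b i \<circ> w) ` R a = sigma I C b i ` (w ` R a)"
    by (simp add: image_comp)
  also have "\<dots> = R (rho i b)"
    using walk_step sigma_image_roots by simp
  finally have "(sigma I C b i \<circ> w) ` R a = R (rho i b)" .
  moreover have "zlinear (sigma I C b i \<circ> w)" "zlinear (w' \<circ> sigma I C (rho i b) i)"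
    using walk_step.IH zlinear_comp[OF zlinear_sigma] zlinear_comp[OF _ zlinear_sigma] by auto
  moreover have "(w' \<circ> sigma I C (rho i b) i) ((sigma I C b i \<circ> w) v) = v" for v
    using walk_step sigma_sigma by simp
  ultimately show ?case
    using walk_step rho_in_A by blast
qed

lemma walk_inverse_root:
  assumes "a \<in> A" "walk a b w w'" "v \<in> R b"
  shows "w' v \<in> R a \<and> w (w' v) = v"
proof -
  have "v \<in> w ` R a" "\<forall>v. w' (w v) = v"
    using walk_props[OF assms(1,2)] assms(3) by auto
  then show ?thesis by auto
qed

definition inversions :: "'a \<Rightarrow> 'a \<Rightarrow> (('i \<Rightarrow> int) \<Rightarrow> ('i \<Rightarrow> int)) \<Rightarrow> ('i \<Rightarrow> int) set" where
  "inversions a b w = {g \<in> pos_roots (R a). w g \<notin> pos_roots (R b)}"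

lemma inversions_subset_roots: "inversions a b w \<subseteq> R a"
  by (auto simp: inversions_def pos_roots_def)

text \<open>If every \<open>w'(\<alpha>\<^sub>i)\<close> were negative, so would be \<open>\<beta> = w'(w \<beta>)\<close>, a nonnegative combination of them.\<close>
lemma walk_pos_preimage_alpha:
  assumes a: "a \<in> A" and walk: "walk a b w w'"
    and beta: "\<beta> \<in> pos_roots (R a)" and w_beta: "w \<beta> \<in> pos_roots (R b)"
  shows "\<exists>i\<in>I. w' (alpha i) \<in> pos_roots (R a)"
proof (rule ccontr)
  assume none: "\<not> ?thesis"
  have b: "b \<in> A" and inv: "\<forall>v. w' (w v) = v" and lin: "zlinear w'"
    using walk_props[OF a walk] by auto
  have nonpos: "w' (alpha i) k \<le> 0" if i: "i \<in> I" for i k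
  proof -
    have "w' (alpha i) \<in> R a" using walk_inverse_root[OF a walk alpha_root[OF b i]] ..
    then show ?thesis using none i root_sign[OF a] by (auto simp: pos_roots_def)
  qed
  define x where "x = w \<beta>"
  have "x \<in> zvec I" and x_nonneg: "\<forall>j. x j \<ge> 0"
    using w_beta roots_zvec[OF b] by (auto simp: x_def pos_roots_def)
  then have "\<beta> = w' (\<lambda>k. \<Sum>i\<in>I. x i * alpha i k)"
    using inv zvec_eq_sum_alpha[OF finite_I] by (metis x_def)
  also have "\<dots> = (\<lambda>k. \<Sum>i\<in>I. x i * w' (alpha i) k)"
    by (rule zlinear_sum[OF lin finite_I])
  finally have "\<beta> k \<le> 0" for k
    using x_nonneg nonpos by (simp add: sum_nonpos mult_nonneg_nonpos)
  then show False
    using pos_root_not_nonpos[OF a beta] by blast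
qed

lemma inversions_grow:
  assumes a: "a \<in> A" and walk: "walk a b w w'" and i: "i \<in> I"
    and g: "w' (alpha i) \<in> pos_roots (R a)"
  shows "inversions a b w \<subset> inversions a (rho i b) (sigma I C b i \<circ> w)"
proof -
  have b: "b \<in> A" and img: "w ` R a = R b" and inv: "\<forall>v. w' (w v) = v" and lin: "zlinear w"
    using walk_props[OF a walk] by auto
  have wg: "w (w' (alpha i)) = alpha i"
    using walk_inverse_root[OF a walk alpha_root[OF b i]] ..
  have old: "d \<in> inversions a (rho i b) (sigma I C b i \<circ> w)" if d: "d \<in> inversions a b w" for d
  proof -
    have dp: "d \<in> pos_roots (R a)" and "w d \<notin> pos_roots (R b)"
      using d by (auto simp: inversions_def)
    moreover have "w d \<in> R b" using dp img by (auto simp: pos_roots_def)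
    ultimately obtain p where p: "p \<in> pos_roots (R b)" and wd: "w d = - p"
      using roots_pos_neg[OF b] by blast
    have "p \<noteq> alpha i"
    proof
      assume "p = alpha i"
      then have "w d = w (- w' (alpha i))" using wd wg zlinear_uminus[OF lin] by simp
      then have "d = - w' (alpha i)" using inv by metis
      then show False using uminus_pos_root_not_pos[OF a g] dp by simp
    qed
    then have "sigma I C b i p \<in> pos_roots (R (rho i b))"
      using sigma_pos_root[OF b i p] by blast
    moreover have "(sigma I C b i \<circ> w) d = - sigma I C b i p"
      using wd zlinear_uminus[OF zlinear_sigma] by simp
    ultimately show ?thesis
      using dp uminus_pos_root_not_pos[OF rho_in_A[OF i b]] by (simp add: inversions_def)
  qed
  have "(sigma I C b i \<circ> w) (w' (alpha i)) \<notin> pos_roots (R (rho i b))"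
    using wg sigma_alpha[OF i i] cartan_diag[OF b i] by (simp add: pos_roots_def alpha_def)
  then have new: "w' (alpha i) \<in> inversions a (rho i b) (sigma I C b i \<circ> w) - inversions a b w"
    using g wg alpha_root[OF b i] by (simp add: inversions_def pos_roots_def alpha_def)
  show ?thesis using old new by blast
qed

end

locale decomposed_root_sys = root_sys I A rho C R
  for I :: "'i set" and A rho C R +
  fixes J :: "'i set"
  assumes J_subset: "J \<subseteq> I"
    and cartan_blocks: "\<forall>a\<in>A. \<forall>x\<in>J. \<forall>y\<in>I - J. C a x y = 0 \<and> C a y x = 0"
begin

definition block_span :: "('i \<Rightarrow> int) set" where
  "block_span = zspan J \<union> zspan (I - J)"

lemma sigma_zspan_blocks:
  assumes "b \<in> A" "i \<in> I"
  shows "v \<in> zspan J \<Longrightarrow> sigma I C b i v \<in> zspan J"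
    and "v \<in> zspan (I - J) \<Longrightarrow> sigma I C b i v \<in> zspan (I - J)"
  using assms cartan_blocks J_subset by (auto intro!: sigma_zspan)

lemma sigma_block_span_iff:
  assumes b: "b \<in> A" and i: "i \<in> I"
  shows "sigma I C b i v \<in> block_span \<longleftrightarrow> v \<in> block_span"
  using sigma_zspan_blocks[OF b i, of v]
    sigma_zspan_blocks[OF rho_in_A[OF i b] i, of "sigma I C b i v"] sigma_sigma[OF b i, of v]
  unfolding block_span_def by auto

lemma block_span_uminus: "v \<in> block_span \<Longrightarrow> - v \<in> block_span"
  by (auto simp: block_span_def zspan_def)

lemma smult_alpha_block_span: "i \<in> I \<Longrightarrow> (\<lambda>k. c * alpha i k) \<in> block_span"
  by (auto simp: block_span_def zspan_def alpha_def)

lemma cone_root_block_span: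
  assumes a: "a \<in> A" and i: "i \<in> I" and j: "j \<in> I" and "i \<noteq> j"
    and v: "v \<in> R a" "v \<in> cone2 i j"
  shows "v \<in> block_span"
proof -
  obtain m n :: nat where v_eq: "v = (\<lambda>k. int m * alpha i k + int n * alpha j k)"
    using v(2) by (auto simp: cone2_def)
  show ?thesis
  proof (cases "i \<in> J \<longleftrightarrow> j \<in> J")
    case same_block: True
    have v0: "v k = 0" if "k \<noteq> i" "k \<noteq> j" for k
      using that by (simp add: v_eq alpha_def)
    show ?thesis
    proof (cases "i \<in> J")
      case True
      then have "v \<in> zspan J" using same_block by (auto simp: zspan_def intro!: v0)
      then show ?thesis by (simp add: block_span_def)
    next
      case False
      then have "v \<in> zspan (I - J)" using same_block i j by (auto simp: zspan_def intro!: v0)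
      then show ?thesis by (simp add: block_span_def)
    qed
  next
    case False
    then have "C a i j = 0" using cartan_blocks a i j by blast
    have "m = 0 \<or> n = 0"
    proof (rule ccontr)
      assume "\<not> (m = 0 \<or> n = 0)"
      then have "v i \<noteq> 0" "v j \<noteq> 0" using \<open>i \<noteq> j\<close> by (simp_all add: v_eq alpha_def)
      then obtain k where "k \<noteq> i" "v k \<noteq> 0" "C a i k \<noteq> 0"
        using root_support_coupled[OF a i v(1)] \<open>i \<noteq> j\<close> by metis
      then show False using \<open>C a i j = 0\<close> by (auto simp: v_eq alpha_def split: if_splits)
    qed
    then show ?thesis
      using smult_alpha_block_span[OF i] smult_alpha_block_span[OF j] by (auto simp: v_eq)
  qed
qed

lemma block_roots_root_system:
  "root_system I A rho C (\<lambda>a. R a \<inter> zspan J \<union> R a \<inter> zspan (I - J))"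
proof -
  have split: "R a \<inter> zspan J \<union> R a \<inter> zspan (I - J) = R a \<inter> block_span" for a
    by (auto simp: block_span_def)
  have zvec: "R a \<inter> block_span \<subseteq> zvec I" if "a \<in> A" for a
    using roots_zvec[OF that] by blast
  have pos_neg: "R a \<inter> block_span = pos_roots (R a \<inter> block_span) \<union> uminus ` pos_roots (R a \<inter> block_span)"
    if "a \<in> A" for a
    using pos_roots_Int_closed[OF roots_pos_neg[OF that] block_span_uminus] .
  have axis: "R a \<inter> block_span \<inter> {v. \<exists>k::int. v = (\<lambda>j. k * alpha i j)} = {alpha i, - alpha i}"
    if "a \<in> A" "i \<in> I" for a i
  proof -
    have "{v. \<exists>k::int. v = (\<lambda>j. k * alpha i j)} \<subseteq> block_span"
      using smult_alpha_block_span[OF that(2)] by blast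
    then have "R a \<inter> block_span \<inter> {v. \<exists>k::int. v = (\<lambda>j. k * alpha i j)}
        = R a \<inter> {v. \<exists>k::int. v = (\<lambda>j. k * alpha i j)}"
      by blast
    then show ?thesis
      using roots_on_axis[OF that] by simp
  qed
  have reflect: "sigma I C a i ` (R a \<inter> block_span) = R (rho i a) \<inter> block_span"
    if ai: "a \<in> A" "i \<in> I" for a i
  proof (intro equalityI subsetI)
    fix u assume "u \<in> sigma I C a i ` (R a \<inter> block_span)"
    then show "u \<in> R (rho i a) \<inter> block_span"
      using sigma_image_roots[OF ai] sigma_block_span_iff[OF ai] by auto
  next
    fix u assume u: "u \<in> R (rho i a) \<inter> block_span"
    then obtain v where "v \<in> R a" "u = sigma I C a i v"
      using sigma_image_roots[OF ai] by auto
    then show "u \<in> sigma I C a i ` (R a \<inter> block_span)"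
      using u sigma_block_span_iff[OF ai] by auto
  qed
  have cone: "((rho i \<circ> rho j) ^^ card (R a \<inter> block_span \<inter> cone2 i j)) a = a"
    if "a \<in> A" "i \<in> I" "j \<in> I" "i \<noteq> j" "finite (R a \<inter> block_span \<inter> cone2 i j)" for a i j
  proof -
    have "R a \<inter> block_span \<inter> cone2 i j = R a \<inter> cone2 i j"
      using cone_root_block_span[OF that(1-4)] by blast
    then show ?thesis
      using rho_rho_power_cone[OF that(1-4)] that(5) by simp
  qed
  show ?thesis
    unfolding root_system_def split
    by (intro conjI ballI impI cartan_scheme zvec pos_neg axis reflect cone)
qed

lemma walk_pos_root_outside_block_span:
  assumes a: "a \<in> A" and "walk a b w w'"
    and beta: "\<beta> \<in> pos_roots (R a)" "\<beta> \<notin> block_span"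
  shows "w \<beta> \<in> pos_roots (R b) \<and> w \<beta> \<notin> block_span"
  using assms(2)
proof (induction rule: walk.induct)
  case walk_refl
  then show ?case using beta by simp
next
  case (walk_step b w w' i)
  have b: "b \<in> A" using walk_props[OF a walk_step.hyps(1)] by blast
  have "w \<beta> \<noteq> alpha i"
    using walk_step.IH smult_alpha_block_span[OF walk_step.hyps(2), of 1] by auto
  then show ?case
    using walk_step sigma_pos_root[OF b] sigma_block_span_iff[OF b] by simp
qed

lemma inversions_unbounded:
  assumes a: "a \<in> A" and fin: "finite (R a)"
    and beta: "\<beta> \<in> pos_roots (R a)" "\<beta> \<notin> block_span"
  shows "\<exists>b w w'. walk a b w w' \<and> n \<le> card (inversions a b w)"
proof (induction n)
  case 0
  show ?case using walk_refl by blast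
next
  case (Suc n)
  then obtain b w w' where walk: "walk a b w w'" and n: "n \<le> card (inversions a b w)"
    by blast
  have "w \<beta> \<in> pos_roots (R b)"
    using walk_pos_root_outside_block_span[OF a walk beta] by blast
  then obtain i where i: "i \<in> I" and "w' (alpha i) \<in> pos_roots (R a)"
    using walk_pos_preimage_alpha[OF a walk beta(1)] by blast
  then have "inversions a b w \<subset> inversions a (rho i b) (sigma I C b i \<circ> w)"
    using inversions_grow[OF a walk] by blast
  with fin have "card (inversions a b w) < card (inversions a (rho i b) (sigma I C b i \<circ> w))"
    by (meson psubset_card_mono inversions_subset_roots rev_finite_subset)
  then have "Suc n \<le> card (inversions a (rho i b) (sigma I C b i \<circ> w))"
    using n by linarith
  then show ?case
    using walk_step[OF walk i] by blast
qed

lemma finite_roots_split: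
  assumes a: "a \<in> A" and fin: "finite (R a)"
  shows "R a \<subseteq> zspan J \<union> zspan (I - J)"
proof -
  have "\<beta> \<in> block_span" if beta: "\<beta> \<in> pos_roots (R a)" for \<beta>
  proof (rule ccontr)
    assume "\<beta> \<notin> block_span"
    then obtain b w where "Suc (card (R a)) \<le> card (inversions a b w)"
      using inversions_unbounded[OF a fin beta] by blast
    moreover have "card (inversions a b w) \<le> card (R a)"
      using fin inversions_subset_roots by (rule card_mono)
    ultimately show False by simp
  qed
  then show ?thesis
    using roots_pos_neg[OF a] block_span_uminus unfolding block_span_def by blast
qed

end

theorem proposition4p6:
  fixes I I' :: "'i set" and A :: "'a set" and rho :: "'i \<Rightarrow> 'a \<Rightarrow> 'a"
    and C :: "'a \<Rightarrow> 'i \<Rightarrow> 'i \<Rightarrow> int" and R :: "'a \<Rightarrow> ('i \<Rightarrow> int) set"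
  assumes cs: "cartan_scheme I A rho C"
    and conn: "connected_cs I A rho"
    and rs: "root_system I A rho C R"
    and sub: "I' \<subseteq> I" and ne1: "I' \<noteq> {}" and ne2: "I - I' \<noteq> {}"
  defines "Rhat \<equiv> (\<lambda>a. (R a \<inter> zspan I') \<union> (R a \<inter> zspan (I - I')))"
  shows "((\<exists>a\<in>A. \<forall>i\<in>I'. \<forall>j\<in>I - I'. C a i j = 0)
            \<longleftrightarrow> (\<forall>a\<in>A. \<forall>i\<in>I'. \<forall>j\<in>I - I'. C a i j = 0 \<and> C a j i = 0))
       \<and> ((\<exists>a\<in>A. \<forall>i\<in>I'. \<forall>j\<in>I - I'. C a i j = 0)
            \<longleftrightarrow> root_system I A rho C Rhat)
       \<and> (finite_rs A R \<longrightarrow>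
            ((\<exists>a\<in>A. \<forall>i\<in>I'. \<forall>j\<in>I - I'. C a i j = 0) \<longleftrightarrow> (\<forall>a\<in>A. Rhat a = R a))
          \<and> ((\<exists>a\<in>A. \<forall>i\<in>I'. \<forall>j\<in>I - I'. C a i j = 0)
               \<longleftrightarrow> (\<forall>a\<in>A. R a = (R a \<inter> zspan I') \<union> (R a \<inter> zspan (I - I')))))"
proof -
  \<comment> \<open>\<open>cs\<close> is part of \<open>rs\<close>, and the equivalences hold without \<open>ne1\<close>, \<open>ne2\<close>.\<close>
  interpret root_sys I A rho C R by (rule root_sys.intro[OF rs])
  let ?one = "\<exists>a\<in>A. \<forall>i\<in>I'. \<forall>j\<in>I - I'. C a i j = 0"
  let ?two = "\<forall>a\<in>A. \<forall>i\<in>I'. \<forall>j\<in>I - I'. C a i j = 0 \<and> C a j i = 0"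
  obtain a0 where a0: "a0 \<in> A" using A_nonempty by blast
  have one_two: "?one \<longleftrightarrow> ?two"
    using cartan_block_zero_connected[OF sub conn] a0 by blast
  have decomposed: "decomposed_root_sys I A rho C R I'" if ?one
    using one_two that sub by unfold_locales blast+
  have split_one: ?one if "root_system I A rho C S" "S a0 \<subseteq> zspan I' \<union> zspan (I - I')" for S
    using root_sys.cartan_block_zero_if_roots_split[OF root_sys.intro[OF that(1)] sub a0 that(2)] a0
    by blast
  have "?one \<longleftrightarrow> root_system I A rho C Rhat"
    using decomposed_root_sys.block_roots_root_system[OF decomposed] split_one[of Rhat]
    unfolding Rhat_def by blast
  moreover have "?one \<longleftrightarrow> (\<forall>a\<in>A. R a \<subseteq> zspan I' \<union> zspan (I - I'))" if "finite_rs A R"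
    using decomposed_root_sys.finite_roots_split[OF decomposed] split_one[OF rs] a0 that
    unfolding finite_rs_def by blast
  ultimately show ?thesis
    using one_two unfolding Rhat_def by blast
qed

end
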